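(* Let $X=X(\mathbb{Z}_n,S)$ be a circulant graph and let $x,y$ be distinct vertices of $X$. If perfect state transfer occurs on $X$ from $d^*e_x$ to $d^*e_y$, then $n$ is even and $y=x+\frac{n}{2}$.
   Context: For $S\subseteq\mathbb{Z}_n\setminus\{0\}$ with $S=-S$, the circulant graph $X(\mathbb{Z}_n,S)$ has vertex set $\mathbb{Z}_n$ and edge set $\{\{x,y\}\mid y-x\in S\}$. For a graph with symmetric arc set $\mathcal{A}$ ($t((x,y))=y$, $(x,y)^{-1}=(y,x)$): boundary matrix $d_{x,a}=\frac{1}{\sqrt{\deg x}}\delta_{x,t(a)}$, shift matrix $R_{a,b}=\delta_{a,b^{-1}}$, $U=R(2d^*d-I_{\mathcal{A}})$; $e_x$ is the standard unit vector. Perfect state transfer from $\Phi$ to a distinct state $\Psi$ means $U^\tau\Phi=\gamma\Psi$ for some $\tau\in\mathbb{Z}_{\ge1}$, $|\gamma|=1$. *)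

theory Defs
  imports Complex_Main
begin

text \<open>Circulant graph X(Z_n, S): vertices {0..<n} (representatives of Z_n),
  S a subset of {1..<n} (nonzero residues) closed under negation mod n.
  Arcs are ordered pairs (x,y) with y - x in S (mod n).\<close>

definition circ_vertices :: "nat \<Rightarrow> nat set" where
  "circ_vertices n = {0..<n}"

definition circ_conn_set :: "nat \<Rightarrow> nat set \<Rightarrow> bool" where
  "circ_conn_set n S \<longleftrightarrow> S \<subseteq> {1..<n} \<and> (\<forall>s\<in>S. (n - s) \<in> S)"

definition circ_arcs :: "nat \<Rightarrow> nat set \<Rightarrow> (nat \<times> nat) set" where
  "circ_arcs n S = {(x, y). x < n \<and> y < n \<and> (y + n - x) mod n \<in> S}"

text \<open>General graph given by vertex set V and symmetric arc set A; terminus t((x,y)) = y.\<close>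

definition arc_deg :: "('v \<times> 'v) set \<Rightarrow> 'v \<Rightarrow> nat" where
  "arc_deg A x = card {a \<in> A. snd a = x}"

definition bdry :: "('v \<times> 'v) set \<Rightarrow> 'v \<Rightarrow> ('v \<times> 'v) \<Rightarrow> complex" where
  "bdry A x a = (if x = snd a then complex_of_real (1 / sqrt (real (arc_deg A x))) else 0)"

definition shift :: "('v \<times> 'v) \<Rightarrow> ('v \<times> 'v) \<Rightarrow> complex" where
  "shift a b = (if a = prod.swap b then 1 else 0)"

definition coin :: "'v set \<Rightarrow> ('v \<times> 'v) set \<Rightarrow> ('v \<times> 'v) \<Rightarrow> ('v \<times> 'v) \<Rightarrow> complex" where
  "coin V A b c = 2 * (\<Sum>v\<in>V. cnj (bdry A v b) * bdry A v c) - (if b = c then 1 else 0)"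

text \<open>Vectors in C^A are functions on arcs (zero outside A).
  Action of U = R (2 d^* d - I) on such a vector.\<close>
definition walk_U :: "'v set \<Rightarrow> ('v \<times> 'v) set \<Rightarrow> (('v \<times> 'v) \<Rightarrow> complex) \<Rightarrow> (('v \<times> 'v) \<Rightarrow> complex)" where
  "walk_U V A \<psi> = (\<lambda>a. if a \<in> A then
      (\<Sum>b\<in>A. shift a b * (\<Sum>c\<in>A. coin V A b c * \<psi> c)) else 0)"

definition bdry_adj_e :: "('v \<times> 'v) set \<Rightarrow> 'v \<Rightarrow> (('v \<times> 'v) \<Rightarrow> complex)" where
  "bdry_adj_e A x = (\<lambda>a. if a \<in> A then cnj (bdry A x a) else 0)"

definition PST :: "'v set \<Rightarrow> ('v \<times> 'v) set \<Rightarrow> (('v \<times> 'v) \<Rightarrow> complex) \<Rightarrow> (('v \<times> 'v) \<Rightarrow> complex) \<Rightarrow> bool" where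
  "PST V A \<Phi> \<Psi> \<longleftrightarrow> \<Phi> \<noteq> \<Psi> \<and>
     (\<exists>\<tau>::nat. \<tau> \<ge> 1 \<and> (\<exists>\<gamma>::complex. norm \<gamma> = 1 \<and>
        (walk_U V A ^^ \<tau>) \<Phi> = (\<lambda>a. \<gamma> * \<Psi> a)))"

end

theory Submission
  imports Defs
begin

(* Translations v |-> v + c and reflections v |-> c - v of Z_n are automorphisms of every
   circulant graph (reflections because S = -S), and a graph automorphism f commutes with U
   and maps d^* e_(f z) to d^* e_z. Pulling the transfer d^* e_x -> d^* e_y back along the
   translation by x - y yields a transfer d^* e_y -> d^* e_(2y - x) with the same time and
   phase; pulling it back along the reflection v |-> x + y - v yields d^* e_y -> d^* e_x.
   Hence d^* e_(2y - x) = d^* e_x, i.e. 2y = 2x in Z_n, and since x <> y this forces n even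
   and y = x + n/2. *)

definition graph_automorphism :: "'v set \<Rightarrow> ('v \<times> 'v) set \<Rightarrow> ('v \<Rightarrow> 'v) \<Rightarrow> bool" where
  "graph_automorphism V A f \<longleftrightarrow>
     bij_betw f V V \<and> (\<forall>a\<in>V. \<forall>b\<in>V. (f a, f b) \<in> A \<longleftrightarrow> (a, b) \<in> A)"

definition arc_pullback ::
    "('v \<Rightarrow> 'v) \<Rightarrow> ('v \<times> 'v) set \<Rightarrow> (('v \<times> 'v) \<Rightarrow> complex) \<Rightarrow> (('v \<times> 'v) \<Rightarrow> complex)" where
  "arc_pullback f A \<psi> = (\<lambda>a. if a \<in> A then \<psi> (map_prod f f a) else 0)"

lemma graph_automorphismD:
  assumes "graph_automorphism V A f"
  shows "inj_on f V" and "f ` V = V"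
    and "a \<in> V \<Longrightarrow> b \<in> V \<Longrightarrow> (f a, f b) \<in> A \<longleftrightarrow> (a, b) \<in> A"
  using assms by (simp_all add: graph_automorphism_def bij_betw_def)

lemma bij_betw_map_prod_arcs:
  assumes aut: "graph_automorphism V A f" and AV: "A \<subseteq> V \<times> V"
  shows "bij_betw (map_prod f f) A A"
proof -
  note inj = graph_automorphismD(1)[OF aut] and surj = graph_automorphismD(2)[OF aut]
    and adj = graph_automorphismD(3)[OF aut]
  have "inj_on (map_prod f f) A"
    using map_prod_inj_on[OF inj inj] AV by (rule inj_on_subset)
  moreover have "map_prod f f ` A = A"
  proof
    show "map_prod f f ` A \<subseteq> A"
    proof (rule image_subsetI)
      fix e assume e: "e \<in> A"
      with AV obtain p q where "e = (p, q)" "p \<in> V" "q \<in> V" by blast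
      with e adj show "map_prod f f e \<in> A" by simp
    qed
    show "A \<subseteq> map_prod f f ` A"
    proof
      fix e assume "e \<in> A"
      with AV obtain p q where e: "e = (p, q)" "p \<in> V" "q \<in> V" by blast
      then have "p \<in> f ` V" "q \<in> f ` V" using surj by simp_all
      then obtain p' q' where "p' \<in> V" "q' \<in> V" "p = f p'" "q = f q'" by blast
      with e \<open>e \<in> A\<close> adj have "(p', q') \<in> A" "e = map_prod f f (p', q')" by auto
      then show "e \<in> map_prod f f ` A" by blast
    qed
  qed
  ultimately show ?thesis by (simp add: bij_betw_def)
qed

lemma arc_deg_automorphism:
  assumes aut: "graph_automorphism V A f" and AV: "A \<subseteq> V \<times> V" and v: "v \<in> V"
  shows "arc_deg A (f v) = arc_deg A v"
proof -
  let ?F = "map_prod f f"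
  have bij: "bij_betw ?F A A" using bij_betw_map_prod_arcs[OF aut AV] .
  have key: "snd (?F a) = f v \<longleftrightarrow> snd a = v" if "a \<in> A" for a
    using that AV v inj_on_eq_iff[OF graph_automorphismD(1)[OF aut]] by (cases a) auto
  have image: "?F ` {a \<in> A. snd a = v} = {e \<in> A. snd e = f v}"
  proof (intro equalityI subsetI)
    fix e assume "e \<in> ?F ` {a \<in> A. snd a = v}"
    then obtain a where "e = ?F a" and a: "a \<in> {a \<in> A. snd a = v}" by (rule imageE)
    then show "e \<in> {e \<in> A. snd e = f v}" using key bij_betw_apply[OF bij] by simp
  next
    fix e assume e: "e \<in> {e \<in> A. snd e = f v}"
    then have "e \<in> ?F ` A" using bij_betw_imp_surj_on[OF bij] by simp
    then obtain a where "e = ?F a" and a: "a \<in> A" by (rule imageE)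
    then show "e \<in> ?F ` {a \<in> A. snd a = v}" using key[OF a] e by auto
  qed
  have "inj_on ?F {a \<in> A. snd a = v}"
    using bij_betw_imp_inj_on[OF bij] by (rule inj_on_subset) auto
  then show ?thesis
    unfolding arc_deg_def by (simp flip: image add: card_image)
qed

lemma coin_eq:
  assumes "finite V" "snd b \<in> V"
  shows "coin V A b c =
    2 * (if snd b = snd c then complex_of_real (1 / real (arc_deg A (snd b))) else 0) - (if b = c then 1 else 0)"
proof -
  let ?w = "if snd b = snd c then complex_of_real (1 / real (arc_deg A (snd b))) else 0"
  have "cnj (bdry A v b) * bdry A v c = (if v = snd b then ?w else 0)" for v
    by (simp add: bdry_def flip: of_real_mult real_sqrt_mult)
  then have "(\<Sum>v\<in>V. cnj (bdry A v b) * bdry A v c) = (\<Sum>v\<in>V. if v = snd b then ?w else 0)"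
    by simp
  also have "\<dots> = ?w"
    using assms by simp
  finally show ?thesis unfolding coin_def by simp
qed

lemma shift_map_prod:
  assumes "inj_on f V" "a \<in> V \<times> V" "b \<in> V \<times> V"
  shows "shift (map_prod f f a) (map_prod f f b) = shift a b"
proof -
  have "map_prod f f a = prod.swap (map_prod f f b) \<longleftrightarrow> map_prod f f a = map_prod f f (prod.swap b)"
    by (cases b) simp
  also have "\<dots> \<longleftrightarrow> a = prod.swap b"
    using inj_onD[OF map_prod_inj_on[OF assms(1,1)]] assms(2,3) by (cases b) auto
  finally show ?thesis unfolding shift_def by simp
qed

lemma coin_map_prod:
  assumes aut: "graph_automorphism V A f" and finV: "finite V" and AV: "A \<subseteq> V \<times> V"
    and b: "b \<in> A" and c: "c \<in> A"
  shows "coin V A (map_prod f f b) (map_prod f f c) = coin V A b c"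
proof -
  let ?F = "map_prod f f"
  note inj = graph_automorphismD(1)[OF aut] and fV = graph_automorphismD(2)[OF aut]
  have V: "snd b \<in> V" "snd c \<in> V" using b c AV by auto
  have sF: "snd (?F b) = f (snd b)" "snd (?F c) = f (snd c)" by (simp_all add: snd_map_prod)
  have FV: "snd (?F b) \<in> V" using fV V sF by auto
  have "f (snd b) = f (snd c) \<longleftrightarrow> snd b = snd c" using inj V by (simp add: inj_on_eq_iff)
  moreover have "?F b = ?F c \<longleftrightarrow> b = c"
    using bij_betw_imp_inj_on[OF bij_betw_map_prod_arcs[OF aut AV]] b c by (simp add: inj_on_eq_iff)
  ultimately show ?thesis
    using arc_deg_automorphism[OF aut AV V(1)] arc_deg_automorphism[OF aut AV V(2)]
    unfolding coin_eq[OF finV V(1)] coin_eq[OF finV FV] sF by simp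
qed

lemma walk_U_arc_pullback:
  assumes aut: "graph_automorphism V A f" and finV: "finite V" and AV: "A \<subseteq> V \<times> V"
  shows "walk_U V A (arc_pullback f A \<psi>) = arc_pullback f A (walk_U V A \<psi>)"
proof
  fix a
  let ?F = "map_prod f f"
  have bij: "bij_betw ?F A A" using bij_betw_map_prod_arcs[OF aut AV] .
  note inj = graph_automorphismD(1)[OF aut]
  show "walk_U V A (arc_pullback f A \<psi>) a = arc_pullback f A (walk_U V A \<psi>) a"
  proof (cases "a \<in> A")
    case False
    then show ?thesis by (simp add: walk_U_def arc_pullback_def)
  next
    case a: True
    have "arc_pullback f A (walk_U V A \<psi>) a = (\<Sum>b\<in>A. shift (?F a) b * (\<Sum>c\<in>A. coin V A b c * \<psi> c))"
      using a bij_betw_apply[OF bij a] by (simp add: walk_U_def arc_pullback_def)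
    also have "\<dots> = (\<Sum>b\<in>A. shift (?F a) (?F b) * (\<Sum>c\<in>A. coin V A (?F b) c * \<psi> c))"
      by (rule sum.reindex_bij_betw[OF bij, symmetric])
    also have "\<dots> = (\<Sum>b\<in>A. shift (?F a) (?F b) * (\<Sum>c\<in>A. coin V A (?F b) (?F c) * \<psi> (?F c)))"
      by (simp only: sum.reindex_bij_betw[OF bij, of "\<lambda>c. coin V A (?F _) c * \<psi> c"])
    also have "\<dots> = (\<Sum>b\<in>A. shift a b * (\<Sum>c\<in>A. coin V A b c * arc_pullback f A \<psi> c))"
      using a by (intro sum.cong refl arg_cong2[where f = "(*)"])
        (simp_all add: subsetD[OF AV] shift_map_prod[OF inj] coin_map_prod[OF aut finV AV] arc_pullback_def)
    also have "\<dots> = walk_U V A (arc_pullback f A \<psi>) a"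
      using a by (simp add: walk_U_def)
    finally show ?thesis by simp
  qed
qed

lemma funpow_walk_U_arc_pullback:
  assumes "graph_automorphism V A f" "finite V" "A \<subseteq> V \<times> V"
  shows "(walk_U V A ^^ k) (arc_pullback f A \<psi>) = arc_pullback f A ((walk_U V A ^^ k) \<psi>)"
  by (induction k) (simp_all add: walk_U_arc_pullback[OF assms])

lemma arc_pullback_bdry_adj_e:
  assumes aut: "graph_automorphism V A f" and AV: "A \<subseteq> V \<times> V" and z: "z \<in> V"
  shows "arc_pullback f A (bdry_adj_e A (f z)) = bdry_adj_e A z"
proof
  fix a
  show "arc_pullback f A (bdry_adj_e A (f z)) a = bdry_adj_e A z a"
  proof (cases "a \<in> A")
    case a: True
    then have "map_prod f f a \<in> A" "snd a \<in> V"
      using bij_betw_apply[OF bij_betw_map_prod_arcs[OF aut AV]] AV by auto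
    moreover have "f z = f (snd a) \<longleftrightarrow> z = snd a"
      using graph_automorphismD(1)[OF aut] z \<open>snd a \<in> V\<close> by (simp add: inj_on_eq_iff)
    ultimately show ?thesis
      using a arc_deg_automorphism[OF aut AV \<open>snd a \<in> V\<close>]
      by (simp add: arc_pullback_def bdry_adj_e_def bdry_def snd_map_prod)
  qed (simp add: arc_pullback_def bdry_adj_e_def)
qed

lemma bdry_adj_e_transfer_automorphism:
  assumes aut: "graph_automorphism V A f" and finV: "finite V" and AV: "A \<subseteq> V \<times> V"
    and "z \<in> V" "z' \<in> V"
    and transfer: "(walk_U V A ^^ k) (bdry_adj_e A (f z)) = (\<lambda>a. \<gamma> * bdry_adj_e A (f z') a)"
  shows "(walk_U V A ^^ k) (bdry_adj_e A z) = (\<lambda>a. \<gamma> * bdry_adj_e A z' a)"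
proof -
  have "(walk_U V A ^^ k) (bdry_adj_e A z) = arc_pullback f A ((walk_U V A ^^ k) (bdry_adj_e A (f z)))"
    using arc_pullback_bdry_adj_e[OF aut AV \<open>z \<in> V\<close>] funpow_walk_U_arc_pullback[OF aut finV AV]
    by metis
  also have "\<dots> = (\<lambda>a. \<gamma> * arc_pullback f A (bdry_adj_e A (f z')) a)"
    unfolding transfer by (simp add: arc_pullback_def fun_eq_iff)
  also have "\<dots> = (\<lambda>a. \<gamma> * bdry_adj_e A z' a)"
    using arc_pullback_bdry_adj_e[OF aut AV \<open>z' \<in> V\<close>] by simp
  finally show ?thesis .
qed

lemma PST_source_nonzero:
  assumes "PST V A \<Phi> \<Psi>"
  shows "\<Phi> \<noteq> (\<lambda>_. 0)"
proof
  assume \<Phi>: "\<Phi> = (\<lambda>_. 0)"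
  have "walk_U V A (\<lambda>_. 0) = (\<lambda>_. 0)"
    by (simp add: walk_U_def fun_eq_iff)
  then have zero: "(walk_U V A ^^ k) (\<lambda>_. 0) = (\<lambda>_. 0)" for k
    by (induction k) simp_all
  obtain \<tau> \<gamma> where "norm \<gamma> = 1" "(walk_U V A ^^ \<tau>) \<Phi> = (\<lambda>a. \<gamma> * \<Psi> a)" and "\<Phi> \<noteq> \<Psi>"
    using assms unfolding PST_def by blast
  with zero have "\<Psi> = (\<lambda>_. 0)"
    unfolding \<Phi> by (metis mult_eq_0_iff norm_zero zero_neq_one)
  with \<Phi> \<open>\<Phi> \<noteq> \<Psi>\<close> show False by simp
qed

lemma bdry_adj_e_eq_imp_eq:
  assumes "bdry_adj_e A w = bdry_adj_e A x" and "bdry_adj_e A x \<noteq> (\<lambda>_. 0)"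
  shows "w = x"
proof -
  obtain a where a: "bdry_adj_e A x a \<noteq> 0" using assms(2) by blast
  with assms(1) have "bdry_adj_e A w a \<noteq> 0" by simp
  with a show ?thesis by (auto simp: bdry_adj_e_def bdry_def split: if_splits)
qed

lemma circ_arcs_iff:
  "(a, b) \<in> circ_arcs n S \<longleftrightarrow> a < n \<and> b < n \<and> nat ((int b - int a) mod int n) \<in> S"
proof -
  have "(b + n - a) mod n = nat ((int b - int a) mod int n)" if "a < n" for a b
  proof -
    have "int ((b + n - a) mod n) = (int b - int a + int n) mod int n"
      using that by (simp add: zmod_int of_nat_diff algebra_simps)
    then show ?thesis by simp
  qed
  then show ?thesis by (auto simp: circ_arcs_def)
qed

lemma circ_conn_set_uminus_mod:
  assumes "circ_conn_set n S"
  shows "nat ((- d) mod int n) \<in> S \<longleftrightarrow> nat (d mod int n) \<in> S"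
proof -
  have *: "nat ((- d) mod int n) \<in> S" if "nat (d mod int n) \<in> S" for d
  proof -
    have "nat (d mod int n) \<in> {1..<n}" and S: "n - nat (d mod int n) \<in> S"
      using assms that unfolding circ_conn_set_def by auto
    then have "d mod int n \<noteq> 0" "0 \<le> d mod int n" by auto
    then have "nat ((- d) mod int n) = n - nat (d mod int n)"
      by (simp add: zmod_zminus1_eq_if nat_diff_distrib')
    with S show ?thesis by simp
  qed
  from *[of d] *[of "- d"] show ?thesis by auto
qed

lemma circ_automorphismI:
  assumes S: "circ_conn_set n S" and f: "\<And>v. v < n \<Longrightarrow> f v < n" and e: "e = 1 \<or> e = -1"
    and diff: "\<And>a b. a < n \<Longrightarrow> b < n \<Longrightarrow>
      (int (f b) - int (f a)) mod int n = (e * (int b - int a)) mod int n"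
  shows "graph_automorphism (circ_vertices n) (circ_arcs n S) f"
proof -
  have "inj_on f {0..<n}"
  proof (rule inj_onI)
    fix a b assume ab: "a \<in> {0..<n}" "b \<in> {0..<n}" "f a = f b"
    then have "int n dvd e * (int b - int a)"
      using diff[of a b] by (simp add: mod_eq_0_iff_dvd)
    then have "int n dvd int b - int a" using e dvd_minus_iff[of "int n" "int b - int a"] by auto
    moreover have "\<bar>int b - int a\<bar> < int n" using ab by auto
    ultimately show "a = b" using dvd_imp_le_int[of "int b - int a" "int n"] by linarith
  qed
  moreover have "f ` {0..<n} \<subseteq> {0..<n}" using f by auto
  ultimately have "bij_betw f {0..<n} {0..<n}"
    by (simp add: bij_betw_def endo_inj_surj)
  moreover have "nat ((e * d) mod int n) \<in> S \<longleftrightarrow> nat (d mod int n) \<in> S" for d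
    using e by (auto simp: circ_conn_set_uminus_mod[OF S])
  ultimately show ?thesis
    using f diff unfolding graph_automorphism_def circ_vertices_def circ_arcs_iff by auto
qed

lemma circ_translation_automorphism:
  assumes "circ_conn_set n S"
  shows "graph_automorphism (circ_vertices n) (circ_arcs n S) (\<lambda>v. nat ((int v + g) mod int n))"
  by (rule circ_automorphismI[OF assms, of _ 1]) (simp_all add: nat_less_iff mod_diff_eq)

lemma circ_reflection_automorphism:
  assumes "circ_conn_set n S"
  shows "graph_automorphism (circ_vertices n) (circ_arcs n S) (\<lambda>v. nat ((c - int v) mod int n))"
  by (rule circ_automorphismI[OF assms, of _ "-1"]) (simp_all add: nat_less_iff mod_diff_eq)

lemma antipodal_if_dvd_double_diff:
  fixes x y n :: nat
  assumes "x < n" "y < n" "x \<noteq> y" and dvd: "int n dvd 2 * (int y - int x)"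
  shows "even n \<and> y = (x + n div 2) mod n"
proof -
  obtain k where k: "2 * (int y - int x) = int n * k" using dvd by blast
  have "\<bar>int n * k\<bar> < 2 * int n" "int n * k \<noteq> 0" using assms k by auto
  then have "k = 1 \<or> k = -1"
    by (auto simp: abs_mult)
  then show ?thesis
  proof
    assume "k = 1"
    with k have "int n = 2 * (int y - int x)" by simp
    with assms(1) have "n = 2 * (y - x)" and "x < y" by arith+
    then show ?thesis using assms by simp
  next
    assume "k = -1"
    with k have "int n = 2 * (int x - int y)" by simp
    with assms(2) have "n = 2 * (x - y)" and "y < x" by arith+
    then have "x + n div 2 = y + n" by simp
    then show ?thesis using \<open>n = 2 * (x - y)\<close> assms by simp
  qed
qed

lemma finite_circ_vertices: "finite (circ_vertices n)"
  by (simp add: circ_vertices_def)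

lemma circ_arcs_subset: "circ_arcs n S \<subseteq> circ_vertices n \<times> circ_vertices n"
  by (auto simp: circ_vertices_def circ_arcs_def)

lemma circ_transfer_translation:
  assumes S: "circ_conn_set n S" and "x < n" "y < n"
    and transfer: "(walk_U (circ_vertices n) (circ_arcs n S) ^^ k) (bdry_adj_e (circ_arcs n S) x) =
      (\<lambda>a. \<gamma> * bdry_adj_e (circ_arcs n S) y a)"
  shows "(walk_U (circ_vertices n) (circ_arcs n S) ^^ k) (bdry_adj_e (circ_arcs n S) y) =
    (\<lambda>a. \<gamma> * bdry_adj_e (circ_arcs n S) (nat ((2 * int y - int x) mod int n)) a)"
proof -
  define T where "T v = nat ((int v + (int x - int y)) mod int n)" for v
  define w where "w = nat ((2 * int y - int x) mod int n)"
  have "T y = x" "T w = y"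
    using assms(2,3) by (simp_all add: T_def w_def mod_simps)
  have aut: "graph_automorphism (circ_vertices n) (circ_arcs n S) T"
    unfolding T_def by (rule circ_translation_automorphism[OF S])
  have V: "y \<in> circ_vertices n" "w \<in> circ_vertices n"
    using assms(2,3) by (simp_all add: w_def circ_vertices_def nat_less_iff)
  show ?thesis
    unfolding w_def[symmetric]
    by (rule bdry_adj_e_transfer_automorphism[OF aut finite_circ_vertices circ_arcs_subset V])
      (simp add: \<open>T y = x\<close> \<open>T w = y\<close> transfer)
qed

lemma circ_transfer_reflection:
  assumes S: "circ_conn_set n S" and "x < n" "y < n"
    and transfer: "(walk_U (circ_vertices n) (circ_arcs n S) ^^ k) (bdry_adj_e (circ_arcs n S) x) =
      (\<lambda>a. \<gamma> * bdry_adj_e (circ_arcs n S) y a)"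
  shows "(walk_U (circ_vertices n) (circ_arcs n S) ^^ k) (bdry_adj_e (circ_arcs n S) y) =
    (\<lambda>a. \<gamma> * bdry_adj_e (circ_arcs n S) x a)"
proof -
  define R where "R v = nat ((int x + int y - int v) mod int n)" for v
  have "R y = x" "R x = y"
    using assms(2,3) by (simp_all add: R_def)
  have aut: "graph_automorphism (circ_vertices n) (circ_arcs n S) R"
    unfolding R_def by (rule circ_reflection_automorphism[OF S])
  have V: "y \<in> circ_vertices n" "x \<in> circ_vertices n"
    using assms(2,3) by (simp_all add: circ_vertices_def)
  show ?thesis
    by (rule bdry_adj_e_transfer_automorphism[OF aut finite_circ_vertices circ_arcs_subset V])
      (simp add: \<open>R y = x\<close> \<open>R x = y\<close> transfer)
qed

theorem lemma4p2:
  fixes n :: nat and S :: "nat set" and x y :: nat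
  assumes "circ_conn_set n S"
    and "x < n" and "y < n" and "x \<noteq> y"
    and "PST (circ_vertices n) (circ_arcs n S)
           (bdry_adj_e (circ_arcs n S) x) (bdry_adj_e (circ_arcs n S) y)"
  shows "even n \<and> y = (x + n div 2) mod n"
proof -
  let ?\<Phi> = "bdry_adj_e (circ_arcs n S)"
  define w where "w = nat ((2 * int y - int x) mod int n)"
  obtain \<tau> \<gamma> where "norm \<gamma> = 1"
    and transfer: "(walk_U (circ_vertices n) (circ_arcs n S) ^^ \<tau>) (?\<Phi> x) = (\<lambda>a. \<gamma> * ?\<Phi> y a)"
    using assms(5) unfolding PST_def by blast
  have "(\<lambda>a. \<gamma> * ?\<Phi> w a) = (\<lambda>a. \<gamma> * ?\<Phi> x a)"
    using circ_transfer_translation[OF assms(1-3) transfer] circ_transfer_reflection[OF assms(1-3) transfer]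
    unfolding w_def by simp
  then have "?\<Phi> w = ?\<Phi> x"
    using \<open>norm \<gamma> = 1\<close> by (auto simp: fun_eq_iff)
  then have "w = x"
    by (rule bdry_adj_e_eq_imp_eq[OF _ PST_source_nonzero[OF assms(5)]])
  then have "(2 * int y - int x) mod int n = int x mod int n"
    using assms(2) unfolding w_def by (simp add: nat_eq_iff)
  then have "int n dvd 2 * (int y - int x)"
    unfolding mod_eq_dvd_iff by (simp add: algebra_simps)
  then show ?thesis
    using antipodal_if_dvd_double_diff assms(2-4) by blast
qed

end
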